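(* Let $n$ be a nonnegative integer and let $x,y$ be complex numbers such that no denominator below vanishes. Then \[ \sum_{k=0}^{n}(-1)^k\binom{n}{k} \frac{\binom{\frac{x}{2}+k}{k}\binom{x-\frac{1}{2}+k}{k}\binom{y+k}{k}} {\binom{\frac{x-1}{2}+k}{k}\binom{x-\frac{1}{2}+n+k}{k}\binom{x-y-\frac{1}{2}+k}{k}} \frac{1+2x+4k}{1+2x+2n+2k}H_{2k}(x) =\frac{1}{2}\frac{\binom{x-\frac{1}{2}+n}{n}\binom{\frac{x-3}{2}-y+n}{n}} {\binom{\frac{x-1}{2}+n}{n}\binom{x-y-\frac{1}{2}+n}{n}} \big\{H_n(\tfrac{x-1}{2})-H_n(\tfrac{x-3}{2}-y)\big\}. \]
   Context: For complex $z$ and a nonnegative integer $k$, $\binom{z}{k}=\frac{z(z-1)\cdots(z-k+1)}{k!}$ (with $\binom{z}{0}=1$). For complex $x$ and nonnegative integer $m$, $H_0(x)=0$ and $H_m(x)=\sum_{j=1}^m\frac{1}{x+j}$ for $m\ge1$. The parameters are assumed to be such that all denominators are nonzero. *)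

theory Defs
  imports "HOL-Analysis.Analysis"
begin

definition H :: "nat \<Rightarrow> complex \<Rightarrow> complex" where
  "H m x = (\<Sum>j=1..m. 1 / (x + of_nat j))"

end

theory Submission
  imports Defs
begin

text \<open>
  With \<open>a = x + 1/2\<close>, \<open>b = x/2 + 1\<close>, \<open>c = y + 1\<close> the summand is
  \<open>(a + 2k) F\<^sub>n(k) H\<^sub>2\<^sub>k(x) / (a + n)\<^sub>n\<^sub>+\<^sub>1\<close>, where \<open>F\<^sub>n(k)\<close> is the term of Dougall's
  terminating very-well-poised \<open>\<^sub>5F\<^sub>4\<close> sum, and \<open>2 H\<^sub>2\<^sub>k(x) = w\<^sub>k\<close> with
  \<open>w\<^sub>k = \<Sum>\<^sub>i\<^sub><\<^sub>k 1/(a - b + 1 + i) + 1/(b + i)\<close>. Both Dougall's evaluation of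
  \<open>\<Sum>\<^sub>k (a + 2k) F\<^sub>n(k)\<close> and of the \<open>w\<^sub>k\<close>-weighted sum follow by induction on \<open>n\<close>
  from Zeilberger recurrences: the difference of consecutive sums, suitably scaled, is
  \<open>\<Sum>\<^sub>k G(k+1) - G(k)\<close> for an explicit certificate \<open>G\<close>. For the weighted sum, summation by
  parts moves \<open>w\<^sub>k\<^sub>+\<^sub>1 - w\<^sub>k = 1/(a - b + 1 + k) + 1/(b + k)\<close> onto \<open>G(k+1)\<close>, which is
  divisible by exactly these two factors, so the recurrence again only involves the plain sums.
\<close>

lemma pochhammer_Suc_neq_0D:
  fixes z :: "'a :: idom"
  assumes "pochhammer z (Suc m) \<noteq> 0"
  shows "pochhammer z m \<noteq> 0" and "z + of_nat m \<noteq> 0"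
  using assms by (simp_all add: pochhammer_Suc)

lemma gbinomial_add_self: "(z + of_nat k) gchoose k = pochhammer (z + 1) k / fact k"
  by (simp add: gbinomial_pochhammer')

lemma gbinomial_add_self_divide:
  "((z + of_nat k) gchoose k) / ((w + of_nat k) gchoose k) = pochhammer (z + 1) k / pochhammer (w + 1) k"
  by (simp add: gbinomial_add_self)

lemma sign_binomial_eq_pochhammer:
  "(-1) ^ k * of_nat (n choose k) = (pochhammer (- of_nat n) k / fact k :: 'a :: field_char_0)"
  by (simp add: binomial_gbinomial gbinomial_pochhammer)

text \<open>The factor \<open>(a + m + k + 1)\<^sub>m\<^sub>-\<^sub>k\<close> stands for \<open>(a + m + 1)\<^sub>m / (a + m + 1)\<^sub>k\<close>, which avoids
  dividing by \<open>(a + m + 1)\<^sub>k\<close>; the factor \<open>(-m)\<^sub>k\<close> makes the kernel vanish for \<open>k > m\<close>.\<close>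
definition dougall_kernel :: "complex \<Rightarrow> complex \<Rightarrow> complex \<Rightarrow> nat \<Rightarrow> nat \<Rightarrow> complex" where
  "dougall_kernel a b c m k =
     pochhammer (- of_nat m) k * pochhammer a k * pochhammer b k * pochhammer c k
     * pochhammer (a + of_nat m + of_nat k + 1) (m - k)
     / (fact k * pochhammer (a - b + 1) k * pochhammer (a - c + 1) k)"

lemma dougall_kernel_eq_0: "m < k \<Longrightarrow> dougall_kernel a b c m k = 0"
  by (simp add: dougall_kernel_def pochhammer_of_nat_eq_0_lemma)

lemma dougall_kernel_Suc_m:
  "of_nat (Suc m) * (a + 2 * of_nat m + 1) * (a + 2 * of_nat m + 2) * dougall_kernel a b c m k
   = (of_nat (Suc m) - of_nat k) * (a + of_nat m + of_nat k + 1) * dougall_kernel a b c (Suc m) k"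
proof (cases "k \<le> m")
  case True
  then obtain e where m: "m = k + e" using le_Suc_ex by blast
  define z where "z = a + of_nat m + of_nat k + 1"
  have absorb: "(of_nat (Suc m) - of_nat k) * pochhammer (- of_nat (Suc m)) k
             = of_nat (Suc m) * pochhammer (- of_nat m :: complex) k"
    using pochhammer_absorb_comp[of "of_nat (Suc m) :: complex" k] by simp
  have rise: "(a + 2 * of_nat m + 1) * pochhammer z (m - k) = z * pochhammer (z + 1) (m - k)"
    using pochhammer_rec[of z e] pochhammer_Suc[of z e] by (simp add: m z_def algebra_simps)
  have rise_Suc: "pochhammer (z + 1) (Suc m - k) = pochhammer (z + 1) (m - k) * (a + 2 * of_nat m + 2)"
    using pochhammer_Suc[of "z + 1" e] by (simp add: m z_def Suc_diff_le algebra_simps)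
  have shift: "a + of_nat (Suc m) + of_nat k + 1 = z + 1" by (simp add: z_def)
  show ?thesis
    unfolding dougall_kernel_def shift z_def[symmetric] rise_Suc times_divide_eq_right
    by (intro arg_cong2[where f="(/)"] refl) (use absorb rise in algebra)
next
  case False
  then show ?thesis by (cases "k = Suc m") (simp_all add: dougall_kernel_eq_0)
qed

lemma dougall_kernel_Suc_k:
  assumes "pochhammer (a - b + 1) (Suc k) \<noteq> 0" and "pochhammer (a - c + 1) (Suc k) \<noteq> 0"
  shows "of_nat (Suc k) * (a - b + 1 + of_nat k) * (a - c + 1 + of_nat k) * (a + of_nat m + of_nat k + 1)
           * dougall_kernel a b c m (Suc k)
         = (of_nat k - of_nat m) * (a + of_nat k) * (b + of_nat k) * (c + of_nat k) * dougall_kernel a b c m k"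
proof (cases "k < m")
  case True
  define z where "z = a + of_nat m + of_nat k + 1"
  have rec: "pochhammer z (m - k) = z * pochhammer (z + 1) (m - Suc k)"
    using True by (simp add: Suc_diff_Suc flip: pochhammer_rec)
  have shift: "a + of_nat m + of_nat (Suc k) + 1 = z + 1" by (simp add: z_def)
  define N where "N = pochhammer (- of_nat m) k * pochhammer a k * pochhammer b k * pochhammer c k
                       * pochhammer (z + 1) (m - Suc k)"
  define D where "D = fact k * pochhammer (a - b + 1) k * pochhammer (a - c + 1) k"
  define R where "R = of_nat (Suc k) * (a - b + 1 + of_nat k) * (a - c + 1 + of_nat k)"
  have nz: "D \<noteq> 0" "R \<noteq> 0"
    using assms unfolding D_def R_def by (simp_all add: pochhammer_Suc del: of_nat_Suc)
  have Fk: "dougall_kernel a b c m k = z * N / D"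
    unfolding dougall_kernel_def z_def[symmetric] rec N_def D_def by (simp add: mult_ac)
  have FSuc: "dougall_kernel a b c m (Suc k)
      = (of_nat k - of_nat m) * (a + of_nat k) * (b + of_nat k) * (c + of_nat k) * N / (D * R)"
    unfolding dougall_kernel_def shift pochhammer_Suc fact_Suc N_def D_def R_def
    by (simp add: algebra_simps)
  show ?thesis
    unfolding z_def[symmetric] R_def[symmetric] Fk FSuc using nz by (simp add: field_simps)
next
  case False
  then show ?thesis by (cases "k = m") (simp_all add: dougall_kernel_eq_0)
qed

text \<open>Zeilberger's certificate for the recurrence in \<open>m\<close>, scaled by \<open>m + 1\<close> so that it is a
  polynomial multiple of the kernel.\<close>
definition dougall_cert :: "complex \<Rightarrow> complex \<Rightarrow> complex \<Rightarrow> nat \<Rightarrow> nat \<Rightarrow> complex" where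
  "dougall_cert a b c m k =
     - (a - b + of_nat k) * (of_nat k * (a - c + of_nat k) * (a + of_nat m + of_nat k + 1)
        * dougall_kernel a b c (Suc m) k)"

definition dougall_cert_quot :: "complex \<Rightarrow> complex \<Rightarrow> complex \<Rightarrow> nat \<Rightarrow> nat \<Rightarrow> complex" where
  "dougall_cert_quot a b c m k =
     (a + of_nat k) * (c + of_nat k) * (of_nat (Suc m) - of_nat k) * dougall_kernel a b c (Suc m) k"

lemma dougall_cert_Suc:
  assumes "pochhammer (a - b + 1) (Suc m) \<noteq> 0" and "pochhammer (a - c + 1) (Suc m) \<noteq> 0"
  shows "dougall_cert a b c m (Suc k) = (b + of_nat k) * dougall_cert_quot a b c m k"
proof (cases "k \<le> m")
  case True
  then have "pochhammer (a - b + 1) (Suc k) \<noteq> 0" "pochhammer (a - c + 1) (Suc k) \<noteq> 0"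
    using assms by (simp_all add: pochhammer_neq_0_mono)
  from dougall_kernel_Suc_k[OF this, of "Suc m"] show ?thesis
    unfolding dougall_cert_def dougall_cert_quot_def by simp algebra
next
  case False
  then show ?thesis
    by (cases "k = Suc m") (simp_all add: dougall_cert_def dougall_cert_quot_def dougall_kernel_eq_0)
qed

lemma dougall_telescoping:
  assumes "pochhammer (a - b + 1) (Suc m) \<noteq> 0" and "pochhammer (a - c + 1) (Suc m) \<noteq> 0"
  shows "of_nat (Suc m) * ((a - b + 1 + of_nat m) * (a - c + 1 + of_nat m) * (a + 2 * of_nat k)
            * dougall_kernel a b c (Suc m) k
          - (a - b - c + 1 + of_nat m) * (a + 2 * of_nat m + 1) * (a + 2 * of_nat m + 2) * (a + 2 * of_nat k)
            * dougall_kernel a b c m k)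
         = dougall_cert a b c m (Suc k) - dougall_cert a b c m k"
  using dougall_kernel_Suc_m[of m a b c k]
  unfolding dougall_cert_Suc[OF assms] unfolding dougall_cert_def dougall_cert_quot_def by simp algebra

lemma dougall_cert_quot_eq:
  "of_nat (Suc m) * (a + 2 * of_nat k) * ((a - c + 1 + of_nat m) * dougall_kernel a b c (Suc m) k
      - (a + 2 * of_nat m + 1) * (a + 2 * of_nat m + 2) * dougall_kernel a b c m k)
    + dougall_cert_quot a b c m k
   = of_nat k * (a - c + of_nat k) * (a + of_nat m + of_nat k + 1) * dougall_kernel a b c (Suc m) k"
  using dougall_kernel_Suc_m[of m a b c k]
  unfolding dougall_cert_quot_def by simp algebra

lemma dougall_telescoping_sum:
  assumes "pochhammer (a - b + 1) (Suc m) \<noteq> 0" and "pochhammer (a - c + 1) (Suc m) \<noteq> 0"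
  shows "of_nat (Suc m) * ((a - b + 1 + of_nat m) * (a - c + 1 + of_nat m)
            * (\<Sum>k\<le>Suc m. (a + 2 * of_nat k) * dougall_kernel a b c (Suc m) k * w k)
          - (a - b - c + 1 + of_nat m) * (a + 2 * of_nat m + 1) * (a + 2 * of_nat m + 2)
            * (\<Sum>k\<le>m. (a + 2 * of_nat k) * dougall_kernel a b c m k * w k))
         = (\<Sum>k\<le>Suc m. (dougall_cert a b c m (Suc k) - dougall_cert a b c m k) * w k)"
proof -
  have extend: "(\<Sum>k\<le>m. (a + 2 * of_nat k) * dougall_kernel a b c m k * w k)
      = (\<Sum>k\<le>Suc m. (a + 2 * of_nat k) * dougall_kernel a b c m k * w k)"
    by (simp add: dougall_kernel_eq_0)
  show ?thesis
    unfolding extend right_diff_distrib sum_distrib_left sum_subtractf[symmetric]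
    by (rule sum.cong)
      (simp_all add: dougall_telescoping[OF assms, symmetric] mult.assoc right_diff_distrib
        left_diff_distrib)
qed

definition dougall_value :: "complex \<Rightarrow> complex \<Rightarrow> complex \<Rightarrow> nat \<Rightarrow> complex" where
  "dougall_value a b c m =
     pochhammer a (2 * m + 1) * pochhammer (a - b - c + 1) m
     / (pochhammer (a - b + 1) m * pochhammer (a - c + 1) m)"

lemma dougall_sum_recurrence:
  assumes "pochhammer (a - b + 1) (Suc m) \<noteq> 0" and "pochhammer (a - c + 1) (Suc m) \<noteq> 0"
  shows "(a - b + 1 + of_nat m) * (a - c + 1 + of_nat m)
           * (\<Sum>k\<le>Suc m. (a + 2 * of_nat k) * dougall_kernel a b c (Suc m) k)
         = (a - b - c + 1 + of_nat m) * (a + 2 * of_nat m + 1) * (a + 2 * of_nat m + 2)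
           * (\<Sum>k\<le>m. (a + 2 * of_nat k) * dougall_kernel a b c m k)"
proof -
  let ?G = "dougall_cert a b c m"
  have "of_nat (Suc m) * ((a - b + 1 + of_nat m) * (a - c + 1 + of_nat m)
           * (\<Sum>k\<le>Suc m. (a + 2 * of_nat k) * dougall_kernel a b c (Suc m) k)
         - (a - b - c + 1 + of_nat m) * (a + 2 * of_nat m + 1) * (a + 2 * of_nat m + 2)
           * (\<Sum>k\<le>m. (a + 2 * of_nat k) * dougall_kernel a b c m k))
      = (\<Sum>k<Suc (Suc m). ?G (Suc k) - ?G k)"
    using dougall_telescoping_sum[OF assms, where w = "\<lambda>_. 1"]
    by (simp only: mult_1_right lessThan_Suc_atMost)
  also have "\<dots> = 0"
    unfolding sum_lessThan_telescope by (simp add: dougall_cert_def dougall_kernel_eq_0)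
  finally show ?thesis
    by (simp del: of_nat_Suc)
qed

lemma dougall_value_Suc:
  assumes "pochhammer (a - b + 1) (Suc m) \<noteq> 0" and "pochhammer (a - c + 1) (Suc m) \<noteq> 0"
  shows "(a - b + 1 + of_nat m) * (a - c + 1 + of_nat m) * dougall_value a b c (Suc m)
         = (a - b - c + 1 + of_nat m) * (a + 2 * of_nat m + 1) * (a + 2 * of_nat m + 2)
           * dougall_value a b c m"
proof -
  define P where "P = pochhammer a (2 * m + 1)"
  define Q where "Q = pochhammer (a - b - c + 1) m"
  define U where "U = pochhammer (a - b + 1) m"
  define V where "V = pochhammer (a - c + 1) m"
  define u where "u = a - b + 1 + of_nat m"
  define v where "v = a - c + 1 + of_nat m"
  have "pochhammer a (2 * Suc m + 1) = P * (a + 2 * of_nat m + 1) * (a + 2 * of_nat m + 2)"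
    unfolding P_def by (simp add: pochhammer_Suc algebra_simps)
  then have value_Suc: "dougall_value a b c (Suc m)
      = P * (a + 2 * of_nat m + 1) * (a + 2 * of_nat m + 2) * (Q * (a - b - c + 1 + of_nat m))
        / ((U * u) * (V * v))"
    unfolding dougall_value_def pochhammer_Suc[of _ m] Q_def U_def V_def u_def v_def by simp
  have value_m: "dougall_value a b c m = P * Q / (U * V)"
    unfolding dougall_value_def P_def Q_def U_def V_def ..
  have "U \<noteq> 0" "V \<noteq> 0" "u \<noteq> 0" "v \<noteq> 0"
    using pochhammer_Suc_neq_0D assms unfolding U_def V_def u_def v_def by blast+
  then show ?thesis
    unfolding value_Suc value_m u_def[symmetric] v_def[symmetric] by (simp add: field_simps)
qed

theorem dougall_sum:
  assumes "pochhammer (a - b + 1) m \<noteq> 0" and "pochhammer (a - c + 1) m \<noteq> 0"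
  shows "(\<Sum>k\<le>m. (a + 2 * of_nat k) * dougall_kernel a b c m k) = dougall_value a b c m"
  using assms
proof (induction m)
  case 0
  then show ?case by (simp add: dougall_kernel_def dougall_value_def)
next
  case (Suc m)
  let ?S = "\<lambda>m. \<Sum>k\<le>m. (a + 2 * of_nat k) * dougall_kernel a b c m k"
  let ?\<alpha> = "(a - b + 1 + of_nat m) * (a - c + 1 + of_nat m)"
  note nz = pochhammer_Suc_neq_0D[OF Suc.prems(1)] pochhammer_Suc_neq_0D[OF Suc.prems(2)]
  have "?S m = dougall_value a b c m"
    using Suc.IH[OF nz(1) nz(3)] .
  then have "?\<alpha> * ?S (Suc m) = ?\<alpha> * dougall_value a b c (Suc m)"
    by (simp only: dougall_sum_recurrence[OF Suc.prems] dougall_value_Suc[OF Suc.prems])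
  moreover have "?\<alpha> \<noteq> 0"
    using nz by simp
  ultimately show ?case
    using mult_left_cancel by blast
qed

definition dougall_weight :: "complex \<Rightarrow> complex \<Rightarrow> nat \<Rightarrow> complex" where
  "dougall_weight a b k = (\<Sum>i<k. 1 / (a - b + 1 + of_nat i) + 1 / (b + of_nat i))"

lemma dougall_cert_weight_step:
  assumes "pochhammer (a - b + 1) (Suc m) \<noteq> 0" and "pochhammer (a - c + 1) (Suc m) \<noteq> 0"
    and "k \<le> m \<Longrightarrow> b + of_nat k \<noteq> 0"
  shows "dougall_cert a b c m (Suc k) * (1 / (a - b + 1 + of_nat k) + 1 / (b + of_nat k))
         = dougall_cert_quot a b c m k - dougall_cert_quot a b c m (Suc k)
           - of_nat (Suc m) * (a + 2 * of_nat (Suc k))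
             * ((a - c + 1 + of_nat m) * dougall_kernel a b c (Suc m) (Suc k)
                - (a + 2 * of_nat m + 1) * (a + 2 * of_nat m + 2) * dougall_kernel a b c m (Suc k))"
proof (cases "k \<le> m")
  case True
  let ?G = "dougall_cert a b c m (Suc k)"
  define u where "u = a - b + 1 + of_nat k"
  have "u \<noteq> 0"
    using pochhammer_neq_0_mono[OF assms(1), of "Suc k"] True by (simp add: pochhammer_Suc u_def)
  moreover have "?G = - u * (of_nat (Suc k) * (a - c + of_nat (Suc k))
      * (a + of_nat m + of_nat (Suc k) + 1) * dougall_kernel a b c (Suc m) (Suc k))"
    unfolding dougall_cert_def u_def by (simp add: add_ac)
  ultimately have "?G / u = - (of_nat (Suc k) * (a - c + of_nat (Suc k))
      * (a + of_nat m + of_nat (Suc k) + 1) * dougall_kernel a b c (Suc m) (Suc k))"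
    by simp
  moreover have "?G / (b + of_nat k) = dougall_cert_quot a b c m k"
    using dougall_cert_Suc[OF assms(1,2)] assms(3)[OF True] by simp
  ultimately show ?thesis
    using dougall_cert_quot_eq[where k = "Suc k" and m = m and a = a and b = b and c = c]
    unfolding u_def by (simp add: distrib_left) algebra
next
  case False
  then show ?thesis
    by (cases "k = Suc m")
      (simp_all add: dougall_cert_def dougall_cert_quot_def dougall_kernel_eq_0)
qed

lemma dougall_cert_sum_by_parts:
  assumes "pochhammer (a - b + 1) (Suc m) \<noteq> 0" and "pochhammer (a - c + 1) (Suc m) \<noteq> 0"
    and "\<And>k. k \<le> m \<Longrightarrow> b + of_nat k \<noteq> 0"
  shows "(\<Sum>k\<le>Suc m. (dougall_cert a b c m (Suc k) - dougall_cert a b c m k) * dougall_weight a b k)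
         = of_nat (Suc m) * ((a - c + 1 + of_nat m)
             * (\<Sum>k\<le>Suc m. (a + 2 * of_nat k) * dougall_kernel a b c (Suc m) k)
           - (a + 2 * of_nat m + 1) * (a + 2 * of_nat m + 2)
             * (\<Sum>k\<le>m. (a + 2 * of_nat k) * dougall_kernel a b c m k))"
proof -
  let ?G = "dougall_cert a b c m" and ?Q = "dougall_cert_quot a b c m" and ?w = "dougall_weight a b"
  define P where "P k = (a + 2 * of_nat k) * ((a - c + 1 + of_nat m) * dougall_kernel a b c (Suc m) k
      - (a + 2 * of_nat m + 1) * (a + 2 * of_nat m + 2) * dougall_kernel a b c m k)" for k
  \<comment> \<open>the antidifference produced by summation by parts\<close>
  define E where "E k = ?G k * ?w k + ?Q k + of_nat (Suc m) * P k" for k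
  have step: "(?G (Suc k) - ?G k) * ?w k = of_nat (Suc m) * P k + (E (Suc k) - E k)"
    if "k \<le> Suc m" for k
  proof -
    have "?w (Suc k) = ?w k + (1 / (a - b + 1 + of_nat k) + 1 / (b + of_nat k))"
      by (simp add: dougall_weight_def)
    with dougall_cert_weight_step[OF assms(1,2), of k] assms(3)[of k] show ?thesis
      unfolding E_def P_def by (simp add: algebra_simps)
  qed
  have "E 0 = 0"
    using dougall_cert_quot_eq[where k = 0 and m = m and a = a and b = b and c = c]
    by (simp add: E_def P_def dougall_cert_def dougall_weight_def mult.assoc add.commute)
  moreover have "E (Suc (Suc m)) = 0"
    by (simp add: E_def P_def dougall_cert_def dougall_cert_quot_def dougall_kernel_eq_0)
  moreover have "(\<Sum>k\<le>Suc m. (?G (Suc k) - ?G k) * ?w k)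
      = (\<Sum>k<Suc (Suc m). of_nat (Suc m) * P k + (E (Suc k) - E k))"
    unfolding lessThan_Suc_atMost by (rule sum.cong) (simp_all add: step)
  ultimately have "(\<Sum>k\<le>Suc m. (?G (Suc k) - ?G k) * ?w k) = of_nat (Suc m) * (\<Sum>k\<le>Suc m. P k)"
    by (simp only: sum.distrib sum_lessThan_telescope)
      (simp add: sum_distrib_left distrib_left lessThan_Suc_atMost)
  also have "(\<Sum>k\<le>Suc m. P k)
      = (a - c + 1 + of_nat m) * (\<Sum>k\<le>Suc m. (a + 2 * of_nat k) * dougall_kernel a b c (Suc m) k)
        - (a + 2 * of_nat m + 1) * (a + 2 * of_nat m + 2)
          * (\<Sum>k\<le>Suc m. (a + 2 * of_nat k) * dougall_kernel a b c m k)"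
    unfolding P_def sum_distrib_left sum_subtractf[symmetric]
    by (rule sum.cong) (simp_all add: algebra_simps)
  finally show ?thesis
    by (simp add: dougall_kernel_eq_0)
qed

lemma dougall_weighted_recurrence:
  assumes "pochhammer (a - b + 1) (Suc m) \<noteq> 0" and "pochhammer (a - c + 1) (Suc m) \<noteq> 0"
    and "\<And>k. k \<le> m \<Longrightarrow> b + of_nat k \<noteq> 0"
  shows "(a - b + 1 + of_nat m) * (a - c + 1 + of_nat m)
           * (\<Sum>k\<le>Suc m. (a + 2 * of_nat k) * dougall_kernel a b c (Suc m) k * dougall_weight a b k)
         - (a - b - c + 1 + of_nat m) * (a + 2 * of_nat m + 1) * (a + 2 * of_nat m + 2)
           * (\<Sum>k\<le>m. (a + 2 * of_nat k) * dougall_kernel a b c m k * dougall_weight a b k)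
         = (a - c + 1 + of_nat m) * (\<Sum>k\<le>Suc m. (a + 2 * of_nat k) * dougall_kernel a b c (Suc m) k)
           - (a + 2 * of_nat m + 1) * (a + 2 * of_nat m + 2)
             * (\<Sum>k\<le>m. (a + 2 * of_nat k) * dougall_kernel a b c m k)"
    (is "?lhs = ?rhs")
proof (rule mult_left_cancel[THEN iffD1, rotated])
  show "of_nat (Suc m) \<noteq> (0 :: complex)"
    by (simp del: of_nat_Suc)
  show "of_nat (Suc m) * ?lhs = of_nat (Suc m) * ?rhs"
    unfolding dougall_telescoping_sum[OF assms(1,2)] by (rule dougall_cert_sum_by_parts[OF assms])
qed

theorem dougall_weighted_sum:
  assumes "pochhammer (a - b + 1) m \<noteq> 0" and "pochhammer (a - c + 1) m \<noteq> 0"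
    and "\<And>k. k < m \<Longrightarrow> b + of_nat k \<noteq> 0"
    and "\<And>k. k < m \<Longrightarrow> a - b - c + 1 + of_nat k \<noteq> 0"
  shows "(\<Sum>k\<le>m. (a + 2 * of_nat k) * dougall_kernel a b c m k * dougall_weight a b k)
         = dougall_value a b c m * (\<Sum>k<m. 1 / (a - b + 1 + of_nat k) - 1 / (a - b - c + 1 + of_nat k))"
  using assms
proof (induction m)
  case 0
  then show ?case by (simp add: dougall_kernel_def dougall_weight_def)
next
  case (Suc m)
  note nz = pochhammer_Suc_neq_0D[OF Suc.prems(1)] pochhammer_Suc_neq_0D[OF Suc.prems(2)]
  define u where "u = a - b + 1 + of_nat m"
  define v where "v = a - c + 1 + of_nat m"
  define w where "w = a - b - c + 1 + of_nat m"
  define x where "x = (a + 2 * of_nat m + 1) * (a + 2 * of_nat m + 2)"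
  define D where "D = (\<Sum>k<m. 1 / (a - b + 1 + of_nat k) - 1 / (a - b - c + 1 + of_nat k))"
  let ?S = "\<lambda>m. \<Sum>k\<le>m. (a + 2 * of_nat k) * dougall_kernel a b c m k * dougall_weight a b k"
  let ?V = "dougall_value a b c"
  have IH: "?S m = ?V m * D"
    unfolding D_def using Suc nz by simp
  have "u \<noteq> 0" "v \<noteq> 0" "w \<noteq> 0"
    using nz Suc.prems(4)[of m] unfolding u_def v_def w_def by simp_all
  moreover have "u * v * ?S (Suc m) - w * x * ?S m = v * ?V (Suc m) - x * ?V m"
    using dougall_weighted_recurrence[OF Suc.prems(1,2)] Suc.prems(3)
      dougall_sum[OF Suc.prems(1,2)] dougall_sum[OF nz(1,3)]
    unfolding u_def v_def w_def x_def by (simp add: mult.assoc)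
  moreover have "u * v * ?V (Suc m) = w * x * ?V m"
    using dougall_value_Suc[OF Suc.prems(1,2)] unfolding u_def v_def w_def x_def by (simp add: mult.assoc)
  ultimately have "?S (Suc m) = ?V (Suc m) * (D + (1 / u - 1 / w))"
    unfolding IH by (simp add: field_simps) algebra
  then show ?case
    by (simp add: D_def u_def w_def)
qed

lemma dougall_kernel_div_pochhammer:
  assumes "k \<le> n" and "pochhammer (a + of_nat n) (Suc n) \<noteq> 0"
  shows "dougall_kernel a b c n k / pochhammer (a + of_nat n) (Suc n)
         = pochhammer (- of_nat n) k * pochhammer a k * pochhammer b k * pochhammer c k
           / (fact k * pochhammer (a - b + 1) k * pochhammer (a - c + 1) k * pochhammer (a + of_nat n) (Suc k))"
proof -
  have split: "pochhammer (a + of_nat n) (Suc n)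
      = pochhammer (a + of_nat n) (Suc k) * pochhammer (a + of_nat n + of_nat k + 1) (n - k)"
    using pochhammer_product[of "Suc k" "Suc n" "a + of_nat n"] assms(1) by (simp add: add_ac)
  with assms(2) have "pochhammer (a + of_nat n) (Suc k) \<noteq> 0"
      "pochhammer (a + of_nat n + of_nat k + 1) (n - k) \<noteq> 0"
    by auto
  then show ?thesis
    unfolding dougall_kernel_def split by (simp add: field_simps)
qed

lemma dougall_value_div_pochhammer:
  assumes "pochhammer (a + of_nat n) (Suc n) \<noteq> 0"
  shows "dougall_value a b c n / pochhammer (a + of_nat n) (Suc n)
         = pochhammer a n * pochhammer (a - b - c + 1) n / (pochhammer (a - b + 1) n * pochhammer (a - c + 1) n)"
proof -
  have "pochhammer a (2 * n + 1) = pochhammer a n * pochhammer (a + of_nat n) (Suc n)"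
    using pochhammer_product'[of a n "Suc n"] by (simp add: mult_2)
  with assms show ?thesis
    unfolding dougall_value_def by (simp add: field_simps)
qed

lemma H_eq_sum_lessThan: "H n z = (\<Sum>j<n. 1 / (z + 1 + of_nat j))"
  unfolding H_def by (simp add: sum.atLeast1_atMost_eq add_ac)

lemma H_double_eq_dougall_weight: "H (2 * k) x = dougall_weight (x + 1/2) (x/2 + 1) k / 2"
proof (induction k)
  case 0
  then show ?case by (simp add: H_def dougall_weight_def)
next
  case (Suc k)
  have "H (2 * Suc k) x = H (2 * k) x + 1 / (x + of_nat (2 * k + 1)) + 1 / (x + of_nat (2 * k + 2))"
    by (simp add: H_def numeral_2_eq_2)
  moreover have "x + 1/2 - (x/2 + 1) + 1 + of_nat k = (x + of_nat (2 * k + 1)) / 2"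
    "x/2 + 1 + of_nat k = (x + of_nat (2 * k + 2)) / 2"
    by (simp_all add: field_simps)
  then have "dougall_weight (x + 1/2) (x/2 + 1) (Suc k) = dougall_weight (x + 1/2) (x/2 + 1) k
      + 2 / (x + of_nat (2 * k + 1)) + 2 / (x + of_nat (2 * k + 2))"
    by (simp only: dougall_weight_def sum.lessThan_Suc) simp
  ultimately show ?case
    using Suc by simp
qed

lemma summand_eq_dougall_term:
  fixes x y :: complex
  defines "a \<equiv> x + 1/2" and "b \<equiv> x/2 + 1" and "c \<equiv> y + 1"
  assumes "k \<le> n" and "pochhammer (a + of_nat n) (Suc n) \<noteq> 0"
  shows "(-1) ^ k * of_nat (n choose k)
            * ( ((x / 2 + of_nat k) gchoose k) * ((x - 1/2 + of_nat k) gchoose k) * ((y + of_nat k) gchoose k)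
              / ( (((x - 1) / 2 + of_nat k) gchoose k) * ((x - 1/2 + of_nat n + of_nat k) gchoose k)
                  * ((x - y - 1/2 + of_nat k) gchoose k) ) )
            * ((1 + 2 * x + 4 * of_nat k) / (1 + 2 * x + 2 * of_nat n + 2 * of_nat k))
         = (a + 2 * of_nat k) * dougall_kernel a b c n k / pochhammer (a + of_nat n) (Suc n)"
proof -
  have params: "x - 1/2 + 1 = a" "(x - 1) / 2 + 1 = a - b + 1" "x - 1/2 + of_nat n + 1 = a + of_nat n"
      "x - y - 1/2 + 1 = a - c + 1" "y + 1 = c" "x / 2 + 1 = b"
    by (simp_all add: a_def b_def c_def field_simps)
  have ratio: "((x / 2 + of_nat k) gchoose k) * ((x - 1/2 + of_nat k) gchoose k) * ((y + of_nat k) gchoose k)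
        / ((((x - 1) / 2 + of_nat k) gchoose k) * ((x - 1/2 + of_nat n + of_nat k) gchoose k)
          * ((x - y - 1/2 + of_nat k) gchoose k))
      = pochhammer b k * pochhammer a k * pochhammer c k
        / (pochhammer (a - b + 1) k * pochhammer (a + of_nat n) k * pochhammer (a - c + 1) k)"
    unfolding times_divide_times_eq[symmetric] gbinomial_add_self_divide params ..
  have factor: "(1 + 2 * x + 4 * of_nat k) / (1 + 2 * x + 2 * of_nat n + 2 * of_nat k)
      = (a + 2 * of_nat k) / (a + of_nat n + of_nat k)"
    using mult_divide_mult_cancel_left[of 2 "a + 2 * of_nat k" "a + of_nat n + of_nat k"]
    unfolding a_def by (simp add: algebra_simps)
  have kernel: "(a + 2 * of_nat k) * dougall_kernel a b c n k / pochhammer (a + of_nat n) (Suc n)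
      = (a + 2 * of_nat k) * (pochhammer (- of_nat n) k * pochhammer a k * pochhammer b k * pochhammer c k
        / (fact k * pochhammer (a - b + 1) k * pochhammer (a - c + 1) k * pochhammer (a + of_nat n) (Suc k)))"
    by (simp only: times_divide_eq_right[symmetric] dougall_kernel_div_pochhammer[OF assms(4,5)])
  show ?thesis
    unfolding kernel ratio factor sign_binomial_eq_pochhammer unfolding pochhammer_Suc
    by (simp add: ac_simps)
qed

lemma dougall_parameters_nondegenerate:
  fixes x y :: complex
  defines "a \<equiv> x + 1/2" and "b \<equiv> x/2 + 1" and "c \<equiv> y + 1"
  assumes d1: "\<forall>k\<le>n. ((x - 1) / 2 + of_nat k) gchoose k \<noteq> 0"
      and d2: "\<forall>k\<le>n. (x - 1/2 + of_nat n + of_nat k) gchoose k \<noteq> 0"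
      and d3: "\<forall>k\<le>n. (x - y - 1/2 + of_nat k) gchoose k \<noteq> 0"
      and d4: "\<forall>k\<le>n. 1 + 2 * x + 2 * of_nat n + 2 * of_nat k \<noteq> 0"
      and d5: "\<forall>j\<in>{1..2*n}. x + of_nat j \<noteq> 0"
      and d7: "\<forall>j\<in>{1..n}. (x - 3) / 2 - y + of_nat j \<noteq> 0"
  shows "pochhammer (a - b + 1) n \<noteq> 0" and "pochhammer (a - c + 1) n \<noteq> 0"
    and "k < n \<Longrightarrow> b + of_nat k \<noteq> 0" and "k < n \<Longrightarrow> a - b - c + 1 + of_nat k \<noteq> 0"
    and "pochhammer (a + of_nat n) (Suc n) \<noteq> 0"
proof -
  have params: "(x - 1) / 2 + 1 = a - b + 1" "x - y - 1/2 + 1 = a - c + 1"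
      "x - 1/2 + of_nat n + 1 = a + of_nat n"
    by (simp_all add: a_def b_def c_def field_simps)
  show "pochhammer (a - b + 1) n \<noteq> 0" "pochhammer (a - c + 1) n \<noteq> 0"
    using d1 d3 by (auto simp: gbinomial_add_self params)
  show "b + of_nat k \<noteq> 0" if "k < n"
  proof -
    have "2 * k + 2 \<in> {1..2 * n}"
      using that by simp
    then have "x + of_nat (2 * k + 2) \<noteq> 0"
      using d5 by blast
    moreover have "b + of_nat k = (x + of_nat (2 * k + 2)) / 2"
      by (simp add: b_def field_simps)
    ultimately show ?thesis
      by (simp only: divide_eq_0_iff) simp
  qed
  show "a - b - c + 1 + of_nat k \<noteq> 0" if "k < n"
  proof -
    have "Suc k \<in> {1..n}"
      using that by simp
    then have "(x - 3) / 2 - y + of_nat (Suc k) \<noteq> 0"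
      using d7 by blast
    moreover have "a - b - c + 1 + of_nat k = (x - 3) / 2 - y + of_nat (Suc k)"
      by (simp add: a_def b_def c_def field_simps)
    ultimately show ?thesis
      by metis
  qed
  have "pochhammer (a + of_nat n) n \<noteq> 0"
    using d2[rule_format, of n] unfolding gbinomial_add_self params by simp
  moreover have "1 + 2 * x + 2 * of_nat n + 2 * of_nat n = 2 * (a + of_nat n + of_nat n)"
    by (simp add: a_def field_simps)
  with d4 have "a + of_nat n + of_nat n \<noteq> 0"
    by (metis mult_zero_right order_refl)
  ultimately show "pochhammer (a + of_nat n) (Suc n) \<noteq> 0"
    by (simp add: pochhammer_Suc)
qed

lemma lhs_eq_dougall_weighted_sum:
  fixes x y :: complex
  defines "a \<equiv> x + 1/2" and "b \<equiv> x/2 + 1" and "c \<equiv> y + 1"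
  assumes "pochhammer (a + of_nat n) (Suc n) \<noteq> 0"
  shows "(\<Sum>k=0..n. (-1) ^ k * of_nat (n choose k)
            * ( ((x / 2 + of_nat k) gchoose k) * ((x - 1/2 + of_nat k) gchoose k) * ((y + of_nat k) gchoose k)
              / ( (((x - 1) / 2 + of_nat k) gchoose k) * ((x - 1/2 + of_nat n + of_nat k) gchoose k)
                  * ((x - y - 1/2 + of_nat k) gchoose k) ) )
            * ((1 + 2 * x + 4 * of_nat k) / (1 + 2 * x + 2 * of_nat n + 2 * of_nat k))
            * H (2 * k) x)
         = (\<Sum>k\<le>n. (a + 2 * of_nat k) * dougall_kernel a b c n k * dougall_weight a b k)
           / (2 * pochhammer (a + of_nat n) (Suc n))"
  unfolding atLeast0AtMost sum_divide_distrib a_def b_def c_def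
  by (intro sum.cong refl)
    (simp only: atMost_iff summand_eq_dougall_term[OF _ assms(4)[unfolded a_def]]
      H_double_eq_dougall_weight, simp)

lemma rhs_eq_dougall_value:
  fixes x y :: complex
  defines "a \<equiv> x + 1/2" and "b \<equiv> x/2 + 1" and "c \<equiv> y + 1"
  assumes "pochhammer (a + of_nat n) (Suc n) \<noteq> 0"
  shows "1/2 * ( ((x - 1/2 + of_nat n) gchoose n) * (((x - 3) / 2 - y + of_nat n) gchoose n)
               / ( (((x - 1) / 2 + of_nat n) gchoose n) * ((x - y - 1/2 + of_nat n) gchoose n) ) )
             * (H n ((x - 1) / 2) - H n ((x - 3) / 2 - y))
         = dougall_value a b c n * (\<Sum>k<n. 1 / (a - b + 1 + of_nat k) - 1 / (a - b - c + 1 + of_nat k))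
           / (2 * pochhammer (a + of_nat n) (Suc n))"
proof -
  have params: "x - 1/2 + 1 = a" "(x - 1) / 2 + 1 = a - b + 1" "x - y - 1/2 + 1 = a - c + 1"
      "(x - 3) / 2 - y + 1 = a - b - c + 1"
    by (simp_all add: a_def b_def c_def field_simps)
  have "((x - 1/2 + of_nat n) gchoose n) * (((x - 3) / 2 - y + of_nat n) gchoose n)
        / ((((x - 1) / 2 + of_nat n) gchoose n) * ((x - y - 1/2 + of_nat n) gchoose n))
      = dougall_value a b c n / pochhammer (a + of_nat n) (Suc n)"
    unfolding dougall_value_div_pochhammer[OF assms(4)] times_divide_times_eq[symmetric]
      gbinomial_add_self_divide params ..
  then show ?thesis
    unfolding H_eq_sum_lessThan params sum_subtractf by simp
qed

theorem theorem6:
  fixes n :: nat and x y :: complex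
  assumes d1: "\<forall>k\<le>n. ((x - 1) / 2 + of_nat k) gchoose k \<noteq> 0"
      and d2: "\<forall>k\<le>n. (x - 1/2 + of_nat n + of_nat k) gchoose k \<noteq> 0"
      and d3: "\<forall>k\<le>n. (x - y - 1/2 + of_nat k) gchoose k \<noteq> 0"
      and d4: "\<forall>k\<le>n. 1 + 2 * x + 2 * of_nat n + 2 * of_nat k \<noteq> 0"
      and d5: "\<forall>j\<in>{1..2*n}. x + of_nat j \<noteq> 0"
      and d6: "\<forall>j\<in>{1..n}. (x - 1) / 2 + of_nat j \<noteq> 0"
      and d7: "\<forall>j\<in>{1..n}. (x - 3) / 2 - y + of_nat j \<noteq> 0"
  shows "(\<Sum>k=0..n. (-1) ^ k * of_nat (n choose k)
            * ( ((x / 2 + of_nat k) gchoose k) * ((x - 1/2 + of_nat k) gchoose k) * ((y + of_nat k) gchoose k)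
              / ( (((x - 1) / 2 + of_nat k) gchoose k) * ((x - 1/2 + of_nat n + of_nat k) gchoose k)
                  * ((x - y - 1/2 + of_nat k) gchoose k) ) )
            * ((1 + 2 * x + 4 * of_nat k) / (1 + 2 * x + 2 * of_nat n + 2 * of_nat k))
            * H (2 * k) x)
       = 1/2 * ( ((x - 1/2 + of_nat n) gchoose n) * (((x - 3) / 2 - y + of_nat n) gchoose n)
               / ( (((x - 1) / 2 + of_nat n) gchoose n) * ((x - y - 1/2 + of_nat n) gchoose n) ) )
             * (H n ((x - 1) / 2) - H n ((x - 3) / 2 - y))"
proof -
  note nondegenerate = dougall_parameters_nondegenerate[OF d1 d2 d3 d4 d5 d7]
  show ?thesis
    unfolding lhs_eq_dougall_weighted_sum[OF nondegenerate(5)] rhs_eq_dougall_value[OF nondegenerate(5)]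
    by (simp only: dougall_weighted_sum[OF nondegenerate(1-4)])
qed

end
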